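(* Let $\mathcal{G}$ be a finite-dimensional solvable Lie algebra with basis $\{X_i\}$ and structure constants $[X_i,X_j]=C_{ij}^k X_k$, and let $S=\{\lambda_\alpha\}$ be a finite abelian semigroup with 2-selector $K_{\alpha\beta}^{\gamma}$. Then the $S$-expanded algebra $\mathcal{G}_S=S\otimes\mathcal{G}$ is solvable.
   Context: For a finite abelian semigroup $S=\{\lambda_\alpha\}$, the 2-selector is defined by $K_{\alpha\beta}^{\gamma}=1$ if $\lambda_\alpha\lambda_\beta=\lambda_\gamma$ and $0$ otherwise. The $S$-expanded algebra $\mathcal{G}_S=S\otimes\mathcal{G}$ is the vector space with basis $X_{(i,\alpha)}=\lambda_\alpha\otimes X_i$ and Lie bracket $[X_{(i,\alpha)},X_{(j,\beta)}]=K_{\alpha\beta}^{\gamma}C_{ij}^k X_{(k,\gamma)}$ (this is a Lie algebra). A Lie algebra $\mathcal{L}$ is solvable if the derived series $\mathcal{L}^{(0)}=\mathcal{L}$, $\mathcal{L}^{(n)}=[\mathcal{L}^{(n-1)},\mathcal{L}^{(n-1)}]$ reaches $0$. *)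

theory Defs
  imports Main
begin

text \<open>A finite-dimensional Lie algebra over a field 'k is given by a finite basis
 (indexed by the finite type 'i) and structure constants C i j k, i.e.
 [X_i, X_j] = sum_k C i j k X_k.  Elements are coordinate vectors 'i => 'k.\<close>

definition is_lie_algebra :: "('i::finite \<Rightarrow> 'i \<Rightarrow> 'i \<Rightarrow> 'k::field) \<Rightarrow> bool" where
  "is_lie_algebra C \<longleftrightarrow>
     (\<forall>i k. C i i k = 0) \<and>
     (\<forall>i j k. C i j k = - C j i k) \<and>
     (\<forall>i j l m. (\<Sum>k\<in>UNIV. C j l k * C i k m + C l i k * C j k m + C i j k * C l k m) = 0)"

definition lin_span :: "('i \<Rightarrow> 'k::field) set \<Rightarrow> ('i \<Rightarrow> 'k) set" where
  "lin_span B = {(\<lambda>k. \<Sum>a\<in>t. r a * a k) | t r. finite t \<and> t \<subseteq> B}"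

definition lie_bracket :: "('i::finite \<Rightarrow> 'i \<Rightarrow> 'i \<Rightarrow> 'k::field) \<Rightarrow> ('i \<Rightarrow> 'k) \<Rightarrow> ('i \<Rightarrow> 'k) \<Rightarrow> ('i \<Rightarrow> 'k)" where
  "lie_bracket C x y = (\<lambda>k. \<Sum>i\<in>UNIV. \<Sum>j\<in>UNIV. x i * y j * C i j k)"

fun derived_series :: "('i::finite \<Rightarrow> 'i \<Rightarrow> 'i \<Rightarrow> 'k::field) \<Rightarrow> nat \<Rightarrow> ('i \<Rightarrow> 'k) set" where
  "derived_series C 0 = UNIV"
| "derived_series C (Suc n) =
     lin_span {lie_bracket C x y | x y. x \<in> derived_series C n \<and> y \<in> derived_series C n}"

definition solvable_lie :: "('i::finite \<Rightarrow> 'i \<Rightarrow> 'i \<Rightarrow> 'k::field) \<Rightarrow> bool" where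
  "solvable_lie C \<longleftrightarrow> (\<exists>n. derived_series C n = {\<lambda>_. 0})"

definition selector :: "'s::ab_semigroup_mult \<Rightarrow> 's \<Rightarrow> 's \<Rightarrow> 'k::field" where
  "selector a b c = (if a * b = c then 1 else 0)"

text \<open>Structure constants of the S-expanded algebra, basis X_(i,alpha) = lambda_alpha (x) X_i.\<close>
definition expanded_consts ::
  "('i::finite \<Rightarrow> 'i \<Rightarrow> 'i \<Rightarrow> 'k::field) \<Rightarrow> ('i \<times> 's::{finite,ab_semigroup_mult}) \<Rightarrow> ('i \<times> 's) \<Rightarrow> ('i \<times> 's) \<Rightarrow> 'k" where
  "expanded_consts C p q r = selector (snd p) (snd q) (snd r) * C (fst p) (fst q) (fst r)"

end

theory Submission
  imports Defs
begin

text \<open>Write an element v of the expanded algebra through its slices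
  v_s = (\<lambda>i. v (i, s)), so that v = sum_s lambda_s (x) v_s.  A bracket in G_S has
  slices [x, y]_s = sum over alpha * beta = s of [x_alpha, y_beta], so by induction
  every slice of an element of the n-th derived algebra of G_S lies in the n-th derived
  algebra of G.  Once the latter is 0, all slices vanish.\<close>

definition coord_subspace :: "('i \<Rightarrow> 'k::field) set \<Rightarrow> bool" where
  "coord_subspace V \<longleftrightarrow> (\<lambda>_. 0) \<in> V \<and> (\<forall>x\<in>V. \<forall>y\<in>V. (\<lambda>k. x k + y k) \<in> V)
     \<and> (\<forall>c. \<forall>x\<in>V. (\<lambda>k. c * x k) \<in> V)"

lemma coord_subspace_sum:
  assumes "coord_subspace V" "finite F" "\<And>b. b \<in> F \<Longrightarrow> v b \<in> V"
  shows "(\<lambda>k. \<Sum>b\<in>F. c b * v b k) \<in> V"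
  using assms(2,3)
proof (induction F rule: finite_induct)
  case empty
  then show ?case using assms(1) by (simp add: coord_subspace_def)
next
  case (insert b F)
  have "(\<lambda>k. c b * v b k) \<in> V" "(\<lambda>k. \<Sum>b\<in>F. c b * v b k) \<in> V"
    using insert assms(1) by (auto simp: coord_subspace_def)
  then have "(\<lambda>k. c b * v b k + (\<Sum>b\<in>F. c b * v b k)) \<in> V"
    using assms(1) unfolding coord_subspace_def by fast
  then show ?case using insert by simp
qed

lemma lin_span_intro: "finite t \<Longrightarrow> t \<subseteq> B \<Longrightarrow> (\<lambda>k. \<Sum>a\<in>t. r a * a k) \<in> lin_span B"
  unfolding lin_span_def by blast

lemma lin_span_superset: "b \<in> B \<Longrightarrow> b \<in> lin_span B"
  using lin_span_intro[of "{b}" B "\<lambda>_. 1"] by simp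

lemma coord_subspace_lin_span: "coord_subspace (lin_span B)"
  unfolding coord_subspace_def
proof (intro conjI ballI allI)
  show "(\<lambda>_. 0) \<in> lin_span B"
    using lin_span_intro[of "{}" B] by simp
next
  fix x y assume "x \<in> lin_span B" "y \<in> lin_span B"
  then obtain t1 r1 t2 r2 where
    t1: "finite t1" "t1 \<subseteq> B" "x = (\<lambda>k. \<Sum>a\<in>t1. r1 a * a k)" and
    t2: "finite t2" "t2 \<subseteq> B" "y = (\<lambda>k. \<Sum>a\<in>t2. r2 a * a k)"
    unfolding lin_span_def by blast
  define r where "r a = (if a \<in> t1 then r1 a else 0) + (if a \<in> t2 then r2 a else 0)" for a
  have "x k + y k = (\<Sum>a\<in>t1 \<union> t2. r a * a k)" for k
  proof -
    have "(\<Sum>a\<in>t1 \<union> t2. r a * a k) = (\<Sum>a\<in>t1 \<union> t2. if a \<in> t1 then r1 a * a k else 0)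
        + (\<Sum>a\<in>t1 \<union> t2. if a \<in> t2 then r2 a * a k else 0)"
      unfolding r_def sum.distrib[symmetric] by (rule sum.cong) (auto simp: distrib_right)
    also have "\<dots> = x k + y k"
      using t1 t2 by (simp add: sum.If_cases Int_absorb1 Int_absorb2)
    finally show ?thesis by simp
  qed
  then show "(\<lambda>k. x k + y k) \<in> lin_span B"
    using t1 t2 lin_span_intro[of "t1 \<union> t2" B r] by simp
next
  fix c x assume "x \<in> lin_span B"
  then obtain t r where t: "finite t" "t \<subseteq> B" "x = (\<lambda>k. \<Sum>a\<in>t. r a * a k)"
    unfolding lin_span_def by blast
  then have "(\<lambda>k. c * x k) = (\<lambda>k. \<Sum>a\<in>t. (c * r a) * a k)"
    by (simp add: sum_distrib_left mult.assoc)
  then show "(\<lambda>k. c * x k) \<in> lin_span B"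
    using t lin_span_intro[of t B "\<lambda>a. c * r a"] by simp
qed

lemma coord_subspace_derived_series: "coord_subspace (derived_series C n)"
  by (cases n) (simp_all only: derived_series.simps coord_subspace_lin_span,
      simp add: coord_subspace_def)

lemma sum_UNIV_prod:
  fixes g :: "'a::finite \<times> 'b::finite \<Rightarrow> 'c::comm_monoid_add"
  shows "(\<Sum>p\<in>UNIV. g p) = (\<Sum>i\<in>UNIV. \<Sum>a\<in>UNIV. g (i, a))"
  using sum.cartesian_product[of "\<lambda>i a. g (i, a)" UNIV UNIV] by (simp add: UNIV_Times_UNIV)

lemma lie_bracket_expanded_consts:
  fixes C :: "'i::finite \<Rightarrow> 'i \<Rightarrow> 'i \<Rightarrow> 'k::field"
    and x y :: "'i \<times> 's::{finite,ab_semigroup_mult} \<Rightarrow> 'k"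
  shows "lie_bracket (expanded_consts C) x y (k, s) =
    (\<Sum>\<alpha>\<in>UNIV. \<Sum>\<beta>\<in>UNIV. selector \<alpha> \<beta> s * lie_bracket C (\<lambda>i. x (i, \<alpha>)) (\<lambda>j. y (j, \<beta>)) k)"
proof -
  let ?t = "\<lambda>i \<alpha> j \<beta>. x (i, \<alpha>) * y (j, \<beta>) * (selector \<alpha> \<beta> s * C i j k)"
  have "lie_bracket (expanded_consts C) x y (k, s) =
      (\<Sum>i\<in>UNIV. \<Sum>\<alpha>\<in>UNIV. \<Sum>j\<in>UNIV. \<Sum>\<beta>\<in>UNIV. ?t i \<alpha> j \<beta>)"
    by (simp add: lie_bracket_def expanded_consts_def sum_UNIV_prod)
  also have "\<dots> = (\<Sum>\<alpha>\<in>UNIV. \<Sum>i\<in>UNIV. \<Sum>j\<in>UNIV. \<Sum>\<beta>\<in>UNIV. ?t i \<alpha> j \<beta>)"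
    by (rule sum.swap)
  also have "\<dots> = (\<Sum>\<alpha>\<in>UNIV. \<Sum>i\<in>UNIV. \<Sum>\<beta>\<in>UNIV. \<Sum>j\<in>UNIV. ?t i \<alpha> j \<beta>)"
    by (intro sum.cong refl sum.swap)
  also have "\<dots> = (\<Sum>\<alpha>\<in>UNIV. \<Sum>\<beta>\<in>UNIV. \<Sum>i\<in>UNIV. \<Sum>j\<in>UNIV. ?t i \<alpha> j \<beta>)"
    by (intro sum.cong refl sum.swap)
  also have "\<dots> = (\<Sum>\<alpha>\<in>UNIV. \<Sum>\<beta>\<in>UNIV. selector \<alpha> \<beta> s * lie_bracket C (\<lambda>i. x (i, \<alpha>)) (\<lambda>j. y (j, \<beta>)) k)"
    by (simp add: lie_bracket_def sum_distrib_left mult_ac)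
  finally show ?thesis .
qed

lemma slice_lie_bracket_expanded_consts:
  fixes C :: "'i::finite \<Rightarrow> 'i \<Rightarrow> 'i \<Rightarrow> 'k::field"
    and x y :: "'i \<times> 's::{finite,ab_semigroup_mult} \<Rightarrow> 'k"
  assumes "\<And>\<alpha>. (\<lambda>i. x (i, \<alpha>)) \<in> derived_series C n"
    and "\<And>\<beta>. (\<lambda>j. y (j, \<beta>)) \<in> derived_series C n"
  shows "(\<lambda>k. lie_bracket (expanded_consts C) x y (k, s)) \<in> derived_series C (Suc n)"
proof -
  let ?V = "derived_series C (Suc n)"
  have brackets: "lie_bracket C (\<lambda>i. x (i, \<alpha>)) (\<lambda>j. y (j, \<beta>)) \<in> ?V" for \<alpha> \<beta>
    using assms by (simp only: derived_series.simps) (rule lin_span_superset, blast)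
  have "(\<lambda>k. \<Sum>\<beta>\<in>UNIV. selector \<alpha> \<beta> s * lie_bracket C (\<lambda>i. x (i, \<alpha>)) (\<lambda>j. y (j, \<beta>)) k) \<in> ?V"
    for \<alpha>
    by (rule coord_subspace_sum[OF coord_subspace_derived_series finite_UNIV brackets])
  then have "(\<lambda>k. \<Sum>\<alpha>\<in>UNIV. 1 *
      (\<Sum>\<beta>\<in>UNIV. selector \<alpha> \<beta> s * lie_bracket C (\<lambda>i. x (i, \<alpha>)) (\<lambda>j. y (j, \<beta>)) k)) \<in> ?V"
    by (rule coord_subspace_sum[OF coord_subspace_derived_series finite_UNIV])
  then show ?thesis by (simp add: lie_bracket_expanded_consts)
qed

lemma slice_derived_series_expanded_consts:
  fixes C :: "'i::finite \<Rightarrow> 'i \<Rightarrow> 'i \<Rightarrow> 'k::field"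
  assumes "v \<in> derived_series (expanded_consts C :: ('i \<times> 's::{finite,ab_semigroup_mult}) \<Rightarrow> _) n"
  shows "(\<lambda>i. v (i, s)) \<in> derived_series C n"
  using assms
proof (induction n arbitrary: v s)
  case 0
  then show ?case by simp
next
  case (Suc n)
  let ?E = "expanded_consts C :: ('i \<times> 's) \<Rightarrow> _"
  from Suc.prems obtain t r where t: "finite t"
    "t \<subseteq> {lie_bracket ?E x y | x y. x \<in> derived_series ?E n \<and> y \<in> derived_series ?E n}"
    "v = (\<lambda>k. \<Sum>a\<in>t. r a * a k)"
    unfolding derived_series.simps lin_span_def by blast
  have "(\<lambda>i. a (i, s)) \<in> derived_series C (Suc n)" if "a \<in> t" for a
  proof -
    from that t(2) obtain x y where "a = lie_bracket ?E x y"
      "x \<in> derived_series ?E n" "y \<in> derived_series ?E n" by blast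
    then show ?thesis using Suc.IH slice_lie_bracket_expanded_consts by blast
  qed
  then have "(\<lambda>i. \<Sum>a\<in>t. r a * a (i, s)) \<in> derived_series C (Suc n)"
    by (rule coord_subspace_sum[OF coord_subspace_derived_series t(1)])
  then show ?case using t(3) by simp
qed

theorem theorem1:
  fixes C :: "'i::finite \<Rightarrow> 'i \<Rightarrow> 'i \<Rightarrow> 'k::field"
  assumes "is_lie_algebra C"
    and "solvable_lie C"
  shows "solvable_lie (expanded_consts C :: ('i \<times> 's::{finite,ab_semigroup_mult}) \<Rightarrow> _)"
proof -
  let ?E = "expanded_consts C :: ('i \<times> 's) \<Rightarrow> _"
  from assms(2) obtain n where n: "derived_series C n = {\<lambda>_. 0}"
    unfolding solvable_lie_def by blast
  have "v = (\<lambda>_. 0)" if "v \<in> derived_series ?E n" for v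
  proof
    fix p :: "'i \<times> 's"
    have "(\<lambda>i. v (i, snd p)) = (\<lambda>_. 0)"
      using slice_derived_series_expanded_consts[OF that] n by blast
    then show "v p = 0" by (metis prod.collapse)
  qed
  moreover have "(\<lambda>_. 0) \<in> derived_series ?E n"
    using coord_subspace_derived_series[of ?E n] by (simp add: coord_subspace_def)
  ultimately have "derived_series ?E n = {\<lambda>_. 0}" by blast
  then show ?thesis unfolding solvable_lie_def by blast
qed

end
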